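(* Let $m\ge n$ and let $K_1,\dots,K_m\subseteq\mathbb{R}^n$ be nontrivial (i.e. $\neq\{o\}$) pointed convex cones. If $\bigcap_{j\in J}K_j\neq\{o\}$ for every $J\subseteq\{1,\dots,m\}$ with $\operatorname{card}J=n$, and $\bigcup_{j\in J}K_j\neq\mathbb{R}^n$ for every $J\subseteq\{1,\dots,m\}$ with $\operatorname{card}J=n+1$, then $\bigcap_{i=1}^mK_i\neq\{o\}$ and $\bigcup_{i=1}^mK_i\neq\mathbb{R}^n$.
   Context: $n\ge2$; $o$ is the zero vector; a cone $K$ is pointed if $K\cap(-K)=\{o\}$. *)

theory Defs
  imports "HOL-Analysis.Analysis"
begin

definition pointed_cone :: "'a::real_vector set \<Rightarrow> bool" where
  "pointed_cone K \<longleftrightarrow> K \<inter> uminus ` K = {0}"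

end

theory Submission
  imports Defs
begin

text \<open>
  Fix n + 1 of the cones. Any n of them share a nonzero vector, so for each j there is a nonzero
  x_j lying in every one of the n + 1 cones except possibly K_j, and these n + 1 vectors
  satisfy a nontrivial linear relation. If the relation has coefficients of both signs, its
  positive part is a vector in all n + 1 cones, nonzero by pointedness. Otherwise pointedness forces
  every nontrivial relation to have full support and a strict sign, so any n of the x_j form a
  basis; subtracting a suitable multiple of the relation from the coordinates of an arbitrary vector
  makes them nonnegative with one of them zero, so the n + 1 cones would cover the space. Hence any
  n + 1 cones share a nonzero vector, and Helly's theorem for the convex sets K_i - {0} yields
  one common to all cones; its negative lies in none of them.
\<close>

lemma pointed_coneD: "pointed_cone K \<Longrightarrow> y \<in> K \<Longrightarrow> - y \<in> K \<Longrightarrow> y = 0"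
  unfolding pointed_cone_def by (metis IntI image_eqI minus_minus singletonD)

lemma convex_cone_sum:
  assumes "convex_cone K" "\<And>j. j \<in> S \<Longrightarrow> 0 \<le> c j \<and> x j \<in> K"
  shows "(\<Sum>j\<in>S. c j *\<^sub>R x j) \<in> K"
proof (cases "finite S")
  case True
  then show ?thesis using assms(2)
  proof (induction S rule: finite_induct)
    case empty
    then show ?case using convex_cone_contains_0[OF assms(1)] by simp
  next
    case (insert a F)
    then show ?case using convex_cone_add[OF assms(1)] convex_cone_scaleR[OF assms(1)] by simp
  qed
next
  case False
  then show ?thesis using convex_cone_contains_0[OF assms(1)] by simp
qed

lemma pointed_cone_sum_nonzero:
  assumes "convex_cone K" "pointed_cone K" "finite S" "S \<noteq> {}"
    and "\<And>j. j \<in> S \<Longrightarrow> 0 < c j \<and> x j \<in> K \<and> x j \<noteq> 0"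
  shows "(\<Sum>j\<in>S. c j *\<^sub>R x j) \<noteq> 0"
proof
  assume sum0: "(\<Sum>j\<in>S. c j *\<^sub>R x j) = 0"
  obtain k where k: "k \<in> S" using assms(4) by blast
  have rest: "(\<Sum>j\<in>S - {k}. c j *\<^sub>R x j) \<in> K"
    using assms(5) by (intro convex_cone_sum[OF assms(1)]) (auto simp: less_imp_le)
  have "(\<Sum>j\<in>S. c j *\<^sub>R x j) = c k *\<^sub>R x k + (\<Sum>j\<in>S - {k}. c j *\<^sub>R x j)"
    using k assms(3) by (simp add: sum.remove)
  then have "- (c k *\<^sub>R x k) \<in> K"
    using sum0 rest by (metis add.commute add_eq_0_iff)
  moreover have "c k *\<^sub>R x k \<in> K"
    using assms(5)[OF k] convex_cone_scaleR[OF assms(1)] by (simp add: less_imp_le)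
  ultimately have "c k *\<^sub>R x k = 0" using pointed_coneD[OF assms(2)] by blast
  then show False using assms(5)[OF k] by simp
qed

lemma convex_pointed_cone_minus_zero:
  assumes "convex_cone K" "pointed_cone K"
  shows "convex (K - {0})"
  unfolding convex_alt
proof (intro ballI allI impI)
  fix x y and u :: real
  assume x: "x \<in> K - {0}" and y: "y \<in> K - {0}" and u: "0 \<le> u \<and> u \<le> 1"
  have "(1 - u) *\<^sub>R x + u *\<^sub>R y \<in> K"
    using assms(1) x y u by (simp add: convex_cone_def convex_alt)
  moreover have "(1 - u) *\<^sub>R x + u *\<^sub>R y \<noteq> 0"
  proof
    assume sum0: "(1 - u) *\<^sub>R x + u *\<^sub>R y = 0"
    have "- (u *\<^sub>R y) = (1 - u) *\<^sub>R x"
      using sum0 by (simp add: add_eq_0_iff)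
    then have "u *\<^sub>R y \<in> K" "- (u *\<^sub>R y) \<in> K"
      using x y u convex_cone_scaleR[OF assms(1)] by auto
    then have "u *\<^sub>R y = 0" by (rule pointed_coneD[OF assms(2)])
    then have "u = 0" using y by simp
    then show False using sum0 x by simp
  qed
  ultimately show "(1 - u) *\<^sub>R x + u *\<^sub>R y \<in> K - {0}" by simp
qed

definition nontrivial_relation :: "'i set \<Rightarrow> ('i \<Rightarrow> 'a::real_vector) \<Rightarrow> ('i \<Rightarrow> real) \<Rightarrow> bool"
  where "nontrivial_relation J x u \<longleftrightarrow> (\<exists>j\<in>J. u j \<noteq> 0) \<and> (\<Sum>j\<in>J. u j *\<^sub>R x j) = 0"

lemma sum_scaleR_zero_extension:
  fixes x :: "'i \<Rightarrow> 'a::real_vector"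
  assumes "finite J" "J' \<subseteq> J"
  shows "(\<Sum>j\<in>J. (if j \<in> J' then c j else 0) *\<^sub>R x j) = (\<Sum>j\<in>J'. c j *\<^sub>R x j)"
  using assms by (intro sum.mono_neutral_cong_right) auto

lemma nontrivial_relation_zero_extension:
  assumes "finite J" "J' \<subseteq> J" "nontrivial_relation J' x u"
  shows "nontrivial_relation J x (\<lambda>j. if j \<in> J' then u j else 0)"
  using assms sum_scaleR_zero_extension[OF assms(1,2), of u x]
  unfolding nontrivial_relation_def by auto

lemma nontrivial_relation_if_not_inj_on:
  assumes "finite J" "\<not> inj_on x J"
  shows "\<exists>u. nontrivial_relation J x u"
proof -
  obtain a b where ab: "a \<in> J" "b \<in> J" "a \<noteq> b" "x a = x b"
    using assms(2) unfolding inj_on_def by blast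
  define u where "u j = (if j = a then 1 else if j = b then -1 else 0 :: real)" for j
  have "(\<Sum>j\<in>J. u j *\<^sub>R x j) = (\<Sum>j\<in>J. (if j = a then x a else 0) - (if j = b then x b else 0))"
    using ab(3,4) by (intro sum.cong) (auto simp: u_def)
  also have "\<dots> = 0"
    using ab(1,2,4) assms(1) by (simp only: sum_subtractf sum.delta) simp
  finally have "nontrivial_relation J x u"
    using ab(1) by (auto simp: nontrivial_relation_def u_def)
  then show ?thesis by blast
qed

lemma dependent_image_iff_nontrivial_relation:
  assumes "finite J" "inj_on x J"
  shows "dependent (x ` J) \<longleftrightarrow> (\<exists>u. nontrivial_relation J x u)"
proof
  assume "dependent (x ` J)"
  then obtain w where "\<exists>v\<in>x ` J. w v \<noteq> 0" "(\<Sum>v\<in>x ` J. w v *\<^sub>R v) = 0"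
    using assms(1) by (auto simp: dependent_finite)
  then have "nontrivial_relation J x (w \<circ> x)"
    using assms(2) by (auto simp: nontrivial_relation_def sum.reindex)
  then show "\<exists>u. nontrivial_relation J x u" by blast
next
  assume "\<exists>u. nontrivial_relation J x u"
  then obtain u where u: "\<exists>j\<in>J. u j \<noteq> 0" "(\<Sum>j\<in>J. u j *\<^sub>R x j) = 0"
    unfolding nontrivial_relation_def by blast
  define w where "w = u \<circ> the_inv_into J x"
  have w_x: "w (x j) = u j" if "j \<in> J" for j
    using assms(2) that by (simp add: w_def the_inv_into_f_f)
  have "(\<Sum>v\<in>x ` J. w v *\<^sub>R v) = (\<Sum>j\<in>J. u j *\<^sub>R x j)"
    using assms(2) by (simp add: sum.reindex w_x)
  moreover have "\<exists>v\<in>x ` J. w v \<noteq> 0"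
    using u(1) w_x by auto
  ultimately show "dependent (x ` J)"
    using assms(1) u(2) by (auto simp: dependent_finite)
qed

lemma nontrivial_relation_exists:
  fixes x :: "'i \<Rightarrow> 'a::euclidean_space"
  assumes "finite J" "DIM('a) < card J"
  shows "\<exists>u. nontrivial_relation J x u"
proof (cases "inj_on x J")
  case True
  then have "dependent (x ` J)"
    using assms by (intro dependent_biggerset) (simp add: card_image)
  then show ?thesis
    using dependent_image_iff_nontrivial_relation[OF assms(1) True] by blast
qed (use nontrivial_relation_if_not_inj_on assms in blast)

lemma linear_combination_if_no_nontrivial_relation:
  fixes x :: "'i \<Rightarrow> 'a::euclidean_space"
  assumes "finite J" "card J = DIM('a)" "\<nexists>u. nontrivial_relation J x u"
  shows "\<exists>c. z = (\<Sum>j\<in>J. c j *\<^sub>R x j)"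
proof -
  have inj: "inj_on x J"
    using nontrivial_relation_if_not_inj_on assms(1,3) by blast
  then have "independent (x ` J)"
    using dependent_image_iff_nontrivial_relation[OF assms(1)] assms(3) by blast
  moreover have "card (x ` J) = dim (UNIV :: 'a set)"
    using inj assms(2) by (simp add: card_image)
  ultimately have "span (x ` J) = UNIV"
    using assms(1) card_eq_dim[of "x ` J" UNIV] by auto
  then obtain c where "z = (\<Sum>v\<in>x ` J. c v *\<^sub>R v)"
    using assms(1) by (auto simp: span_finite)
  then have "z = (\<Sum>j\<in>J. (c \<circ> x) j *\<^sub>R x j)"
    using inj by (simp add: sum.reindex)
  then show ?thesis by blast
qed

locale cone_witness_family =
  fixes J :: "'i set" and K :: "'i \<Rightarrow> 'a::real_vector set" and x :: "'i \<Rightarrow> 'a"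
  assumes finite: "finite J"
    and cone: "\<And>i. i \<in> J \<Longrightarrow> convex_cone (K i)"
    and pointed: "\<And>i. i \<in> J \<Longrightarrow> pointed_cone (K i)"
    and nonzero: "\<And>j. j \<in> J \<Longrightarrow> x j \<noteq> 0"
    and witness: "\<And>i j. i \<in> J \<Longrightarrow> j \<in> J \<Longrightarrow> j \<noteq> i \<Longrightarrow> x j \<in> K i"
begin

lemma common_vector_if_mixed_signs:
  assumes "(\<Sum>j\<in>J. u j *\<^sub>R x j) = 0" "a \<in> J" "0 < u a" "b \<in> J" "u b < 0"
  shows "\<exists>y. y \<noteq> 0 \<and> (\<forall>i\<in>J. y \<in> K i)"
proof -
  define P where "P = {j\<in>J. 0 < u j}"
  define y where "y = (\<Sum>j\<in>P. u j *\<^sub>R x j)"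
  have P: "finite P" "P \<subseteq> J" "a \<in> P" "b \<notin> P"
    using finite assms(2-5) by (auto simp: P_def)
  have "y + (\<Sum>j\<in>J - P. u j *\<^sub>R x j) = 0"
    using assms(1) sum.subset_diff[OF P(2) finite, of "\<lambda>j. u j *\<^sub>R x j"]
    by (simp add: y_def add.commute)
  then have y_rest: "y = (\<Sum>j\<in>J - P. (- u j) *\<^sub>R x j)"
    by (simp add: sum_negf add_eq_0_iff)
  have "y \<noteq> 0"
    unfolding y_def using P assms(4)
    by (intro pointed_cone_sum_nonzero[OF cone pointed]) (auto simp: P_def nonzero intro: witness)
  moreover have "y \<in> K i" if "i \<in> J" for i
  proof (cases "i \<in> P")
    case True
    then show ?thesis unfolding y_rest using that
      by (intro convex_cone_sum[OF cone]) (auto simp: P_def intro: witness)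
  next
    case False
    then show ?thesis unfolding y_def using that P(2)
      by (intro convex_cone_sum[OF cone]) (auto simp: P_def intro: witness)
  qed
  ultimately show ?thesis by blast
qed

lemma nonneg_relation_positive:
  assumes "nontrivial_relation J x u" "\<And>j. j \<in> J \<Longrightarrow> 0 \<le> u j" "i \<in> J"
  shows "0 < u i"
proof (rule ccontr)
  assume "\<not> 0 < u i"
  then have ui: "u i = 0" using assms(2,3) by force
  define S where "S = {j\<in>J. u j \<noteq> 0}"
  have "(\<Sum>j\<in>S. u j *\<^sub>R x j) = (\<Sum>j\<in>J. u j *\<^sub>R x j)"
    using finite by (intro sum.mono_neutral_left) (auto simp: S_def)
  also have "\<dots> = 0"
    using assms(1) by (simp add: nontrivial_relation_def)
  finally have "(\<Sum>j\<in>S. u j *\<^sub>R x j) = 0" .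
  moreover have "(\<Sum>j\<in>S. u j *\<^sub>R x j) \<noteq> 0"
    using finite assms(1,2) ui
    by (intro pointed_cone_sum_nonzero[OF cone[OF assms(3)] pointed[OF assms(3)]])
       (auto simp: S_def nontrivial_relation_def less_le nonzero intro: witness[OF assms(3)])
  ultimately show False by contradiction
qed

lemma relation_strict_sign:
  assumes "\<nexists>y. y \<noteq> 0 \<and> (\<forall>i\<in>J. y \<in> K i)" "nontrivial_relation J x u"
  shows "(\<forall>j\<in>J. 0 < u j) \<or> (\<forall>j\<in>J. u j < 0)"
proof (cases "\<forall>j\<in>J. 0 \<le> u j")
  case True
  then show ?thesis using nonneg_relation_positive[OF assms(2)] by blast
next
  case False
  then obtain b where b: "b \<in> J" "u b < 0" by force
  have "u j \<le> 0" if "j \<in> J" for j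
    using common_vector_if_mixed_signs[of u j b] assms b that
    by (force simp: nontrivial_relation_def)
  moreover have "nontrivial_relation J x (\<lambda>j. - u j)"
    using assms(2) by (simp add: nontrivial_relation_def sum_negf)
  ultimately have "\<forall>j\<in>J. 0 < - u j"
    using nonneg_relation_positive by (metis neg_0_le_iff_le)
  then show ?thesis by simp
qed

lemma positive_relation_if_no_common_vector:
  assumes "\<nexists>y. y \<noteq> 0 \<and> (\<forall>i\<in>J. y \<in> K i)" "nontrivial_relation J x u"
  obtains w where "(\<Sum>j\<in>J. w j *\<^sub>R x j) = 0" "\<And>j. j \<in> J \<Longrightarrow> 0 < w j"
proof -
  consider "\<forall>j\<in>J. 0 < u j" | "\<forall>j\<in>J. u j < 0"
    using relation_strict_sign[OF assms] by blast
  then show thesis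
  proof cases
    case 1
    then show thesis using that[of u] assms(2) by (simp add: nontrivial_relation_def)
  next
    case 2
    then show thesis
      using that[of "\<lambda>j. - u j"] assms(2) by (simp add: nontrivial_relation_def sum_negf)
  qed
qed

lemma no_relation_Diff:
  assumes "\<nexists>y. y \<noteq> 0 \<and> (\<forall>i\<in>J. y \<in> K i)" "k \<in> J"
  shows "\<nexists>v. nontrivial_relation (J - {k}) x v"
proof
  assume "\<exists>v. nontrivial_relation (J - {k}) x v"
  then obtain v where "nontrivial_relation J x (\<lambda>j. if j \<in> J - {k} then v j else 0)"
    using nontrivial_relation_zero_extension[OF finite] by blast
  from relation_strict_sign[OF assms(1) this] show False
    using assms(2) by auto
qed

lemma positive_relation_covers:
  assumes "(\<Sum>j\<in>J. w j *\<^sub>R x j) = 0" "\<And>j. j \<in> J \<Longrightarrow> 0 < w j" "J \<noteq> {}"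
  shows "(\<Sum>j\<in>J. c j *\<^sub>R x j) \<in> (\<Union>i\<in>J. K i)"
proof -
  define q where "q = Min ((\<lambda>j. c j / w j) ` J)"
  have "q \<in> (\<lambda>j. c j / w j) ` J"
    unfolding q_def using finite assms(3) by (intro Min_in) auto
  then obtain i where i: "i \<in> J" "q = c i / w i" by blast
  define e where "e j = c j - q * w j" for j
  have e_nonneg: "0 \<le> e j" if "j \<in> J" for j
  proof -
    have "q \<le> c j / w j"
      unfolding q_def using finite that by (intro Min_le) auto
    then show ?thesis
      using assms(2)[OF that] by (simp add: e_def pos_le_divide_eq)
  qed
  have "(\<Sum>j\<in>J. e j *\<^sub>R x j) = (\<Sum>j\<in>J. c j *\<^sub>R x j) - q *\<^sub>R (\<Sum>j\<in>J. w j *\<^sub>R x j)"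
    by (simp add: e_def scaleR_diff_left sum_subtractf scaleR_sum_right)
  then have "(\<Sum>j\<in>J. c j *\<^sub>R x j) = (\<Sum>j\<in>J. e j *\<^sub>R x j)"
    using assms(1) by simp
  also have "\<dots> = (\<Sum>j\<in>J - {i}. e j *\<^sub>R x j)"
    using i assms(2)[OF i(1)] finite by (simp add: sum.remove e_def)
  also have "\<dots> \<in> K i"
    using e_nonneg i(1) by (intro convex_cone_sum[OF cone]) (auto intro: witness)
  finally show ?thesis using i(1) by blast
qed

end

theorem pointed_cones_common_vector:
  fixes K :: "'i \<Rightarrow> 'a::euclidean_space set"
  assumes J: "finite J" "card J = DIM('a) + 1"
    and cone: "\<And>i. i \<in> J \<Longrightarrow> convex_cone (K i)"
    and pointed: "\<And>i. i \<in> J \<Longrightarrow> pointed_cone (K i)"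
    and proper: "(\<Union>i\<in>J. K i) \<noteq> UNIV"
    and drop_one: "\<And>j. j \<in> J \<Longrightarrow> \<exists>y. y \<noteq> 0 \<and> (\<forall>i\<in>J - {j}. y \<in> K i)"
  shows "\<exists>y. y \<noteq> 0 \<and> (\<forall>i\<in>J. y \<in> K i)"
proof (rule ccontr)
  assume no_common: "\<nexists>y. y \<noteq> 0 \<and> (\<forall>i\<in>J. y \<in> K i)"
  obtain x where x: "\<And>j. j \<in> J \<Longrightarrow> x j \<noteq> 0 \<and> (\<forall>i\<in>J - {j}. x j \<in> K i)"
    using drop_one by metis
  interpret cone_witness_family J K x
    using J(1) cone pointed x by unfold_locales auto
  obtain u where u: "nontrivial_relation J x u"
    using nontrivial_relation_exists[OF J(1)] J(2) by auto
  obtain w where w: "(\<Sum>j\<in>J. w j *\<^sub>R x j) = 0" "\<And>j. j \<in> J \<Longrightarrow> 0 < w j"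
    using positive_relation_if_no_common_vector[OF no_common u] by blast
  obtain k where k: "k \<in> J" using J(2) by fastforce
  have card_rest: "card (J - {k}) = DIM('a)"
    using J k by simp
  have "z \<in> (\<Union>i\<in>J. K i)" for z
  proof -
    have "\<exists>c. z = (\<Sum>j\<in>J - {k}. c j *\<^sub>R x j)"
      using J(1) no_relation_Diff[OF no_common k]
      by (intro linear_combination_if_no_nontrivial_relation[OF _ card_rest]) simp_all
    then obtain c where "z = (\<Sum>j\<in>J - {k}. c j *\<^sub>R x j)" ..
    also have "\<dots> = (\<Sum>j\<in>J. (if j \<in> J - {k} then c j else 0) *\<^sub>R x j)"
      by (rule sym, rule sum_scaleR_zero_extension[OF J(1)]) blast
    also have "\<dots> \<in> (\<Union>i\<in>J. K i)"
      using k by (intro positive_relation_covers[OF w]) auto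
    finally show ?thesis .
  qed
  then show False
    using proper by auto
qed

lemma Helly_indexed:
  fixes S :: "'i \<Rightarrow> 'a::euclidean_space set"
  assumes "finite I" "\<And>i. i \<in> I \<Longrightarrow> convex (S i)"
    and small: "\<And>J. J \<subseteq> I \<Longrightarrow> card J \<le> DIM('a) + 1 \<Longrightarrow> (\<Inter>i\<in>J. S i) \<noteq> {}"
  shows "(\<Inter>i\<in>I. S i) \<noteq> {}"
proof (cases "card (S ` I) \<le> DIM('a) + 1")
  case True
  have "\<exists>U\<subseteq>I. inj_on S U \<and> S ` I = S ` U"
    by (rule subset_image_inj[THEN iffD1]) simp
  then obtain U where U: "U \<subseteq> I" "inj_on S U" "S ` I = S ` U"
    by blast
  then have "card U \<le> DIM('a) + 1"
    using True by (simp add: card_image)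
  then show ?thesis
    using small[OF U(1)] U(3) by simp
next
  case False
  have "\<Inter>(S ` I) \<noteq> {}"
  proof (rule Helly)
    show "DIM('a) + 1 \<le> card (S ` I)"
      using False by linarith
    show "\<forall>T\<in>S ` I. convex T"
      using assms(2) by blast
    fix T assume T: "T \<subseteq> S ` I" "card T = DIM('a) + 1"
    then have "\<exists>U\<subseteq>I. inj_on S U \<and> T = S ` U"
      by (intro subset_image_inj[THEN iffD1])
    then obtain U where U: "U \<subseteq> I" "inj_on S U" "T = S ` U"
      by blast
    then have "card U = DIM('a) + 1"
      using T(2) card_image by metis
    then show "\<Inter>T \<noteq> {}"
      using small[OF U(1)] U(3) by simp
  qed
  then show ?thesis .
qed

lemma pointed_cones_Helly:
  fixes K :: "'i \<Rightarrow> 'a::euclidean_space set"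
  assumes "finite I" "I \<noteq> {}"
    and cone: "\<And>i. i \<in> I \<Longrightarrow> convex_cone (K i)"
    and pointed: "\<And>i. i \<in> I \<Longrightarrow> pointed_cone (K i)"
    and small: "\<And>J. J \<subseteq> I \<Longrightarrow> card J \<le> DIM('a) + 1 \<Longrightarrow> \<exists>y. y \<noteq> 0 \<and> (\<forall>i\<in>J. y \<in> K i)"
  shows "\<exists>y. y \<noteq> 0 \<and> (\<forall>i\<in>I. y \<in> K i)"
proof -
  have "(\<Inter>i\<in>I. K i - {0}) \<noteq> {}"
  proof (rule Helly_indexed[OF assms(1)])
    show "convex (K i - {0})" if "i \<in> I" for i
      using convex_pointed_cone_minus_zero cone pointed that by blast
    show "(\<Inter>i\<in>J. K i - {0}) \<noteq> {}" if "J \<subseteq> I" "card J \<le> DIM('a) + 1" for J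
      using small[OF that] by blast
  qed
  then show ?thesis
    using assms(2) by blast
qed

theorem mainTheorem13:
  fixes K :: "nat \<Rightarrow> (real ^ 'n) set" and m :: nat
  assumes n2: "CARD('n) \<ge> 2"
    and mn: "m \<ge> CARD('n)"
    and cone: "\<And>i. i \<in> {1..m} \<Longrightarrow> convex_cone (K i)"
    and pointed: "\<And>i. i \<in> {1..m} \<Longrightarrow> pointed_cone (K i)"
    and nontriv: "\<And>i. i \<in> {1..m} \<Longrightarrow> K i \<noteq> {0}"
    and inter: "\<And>J. J \<subseteq> {1..m} \<Longrightarrow> card J = CARD('n) \<Longrightarrow> (\<Inter>j\<in>J. K j) \<noteq> {0}"
    and union: "\<And>J. J \<subseteq> {1..m} \<Longrightarrow> card J = CARD('n) + 1 \<Longrightarrow> (\<Union>j\<in>J. K j) \<noteq> UNIV"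
  shows "(\<Inter>i\<in>{1..m}. K i) \<noteq> {0} \<and> (\<Union>i\<in>{1..m}. K i) \<noteq> UNIV"
proof -
  let ?n = "CARD('n)"
  have fewer: "\<exists>y. y \<noteq> 0 \<and> (\<forall>i\<in>J. y \<in> K i)" if J: "J \<subseteq> {1..m}" "card J \<le> ?n" for J
  proof -
    obtain J' where J': "J \<subseteq> J'" "J' \<subseteq> {1..m}" "card J' = ?n"
      using exists_subset_between[OF J(2) _ J(1)] mn by auto
    moreover have "0 \<in> (\<Inter>j\<in>J'. K j)"
      using J'(2) cone convex_cone_contains_0 by blast
    ultimately show ?thesis
      using inter[OF J'(2,3)] by blast
  qed
  have at_most_one_more: "\<exists>y. y \<noteq> 0 \<and> (\<forall>i\<in>J. y \<in> K i)"
    if J: "J \<subseteq> {1..m}" "card J \<le> ?n + 1" for J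
  proof (cases "card J \<le> ?n")
    case False
    show ?thesis
    proof (rule pointed_cones_common_vector)
      show "finite J" using J(1) finite_subset by blast
      then have "card (J - {j}) \<le> ?n" if "j \<in> J" for j
        using J(2) that by simp
      then show "\<exists>y. y \<noteq> 0 \<and> (\<forall>i\<in>J - {j}. y \<in> K i)" if "j \<in> J" for j
        using fewer[of "J - {j}"] J(1) that by blast
    qed (use False J cone pointed union in auto)
  qed (use fewer J in blast)
  obtain y where y: "y \<noteq> 0" "\<And>i. i \<in> {1..m} \<Longrightarrow> y \<in> K i"
    using pointed_cones_Helly[of "{1..m}" K] at_most_one_more cone pointed mn n2 by fastforce
  then have "- y \<notin> K i" if "i \<in> {1..m}" for i
    using pointed_coneD[OF pointed[OF that]] that by blast
  then show ?thesis
    using y by blast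
qed

end
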